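(* Let $m,n\ge1$ and let $A\in\{0,1\}^{m\times n}$ have exactly three ones in each row. Each of the following four subsets of $\mathrm{NPadj}(A)$ is the vertex set of a face of $\operatorname{conv}(\mathrm{NPadj}(A))$, and its convex hull is affinely equivalent to $\operatorname{conv}(\mathrm{Part}(A))$: - $F_1=\{x\in\mathrm{NPadj}(A): y_1=0,y_2=1,y_3=1\}$; - $F_2=\{x\in\mathrm{NPadj}(A): y_1=1,y_2=0,y_3=1\}$; - $F_3=\{x\in\mathrm{NPadj}(A): y_1=0,y_2=1,y_3=0\}$; - $F_4=\{x\in\mathrm{NPadj}(A): y_1=1,y_2=0,y_3=0\}$. In particular, $\mathrm{Part}(A)\le_a\mathrm{NPadj}(A)$.
   Context: **Definition of $\mathrm{NPadj}(A)$.** Let $m,n\ge1$ and let $A\in\{0,1\}^{m\times n}$ have exactly three ones in each row. Index the coordinates of $\mathbb{R}^{3n+3}$ by $y_1,y_2,y_3$ and by $x_j,\bar x_j,x'_j$ for $j\in[n]=\{1,\dots,n\}$. Then $\mathrm{NPadj}(A)$ is the set of vectors in $\{0,1\}^{3n+3}$ satisfying: - $x_j+\bar x_j=1$ for all $j\in[n]$; - $y_1+y_2+x'_j+\bar x_j=2$ for all $j\in[n]$; - for each row of $A$, with ones in columns $i<j<k$, the equation $y_3+x_i+x'_j+x'_k=2$. **Partition polytope.** $\mathrm{Part}(A)=\{z\in\{0,1\}^n: Az=\mathbf 1\}$. **Affine reduction of polytopes.** For finite sets $P,Q$ of 0/1 vectors, $P\le_a Q$ means: there is an affine map $\alpha$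 on $\operatorname{conv}(P)$, injective there, such that $\alpha(\operatorname{conv}(P))$ is a face (possibly improper) of $\operatorname{conv}(Q)$. *)

theory Defs
  imports "HOL-Analysis.Analysis"
begin

text \<open>Coordinates of the ambient space of NPadj(A): y1,y2,y3 and x_j, xbar_j, x'_j
  for each column j.  With n = CARD('c) this is a set of 3n+3 coordinates.\<close>
datatype 'c coord = Y1 | Y2 | Y3 | X 'c | Xbar 'c | Xp 'c

lemma UNIV_coord: "(UNIV :: 'c coord set) =
   {Y1, Y2, Y3} \<union> range X \<union> range Xbar \<union> range Xp"
  by (auto intro: coord.exhaust)

instance coord :: (finite) finite
  by standard (simp add: UNIV_coord)

definition Part :: "real ^ 'c ^ 'r \<Rightarrow> (real ^ 'c) set" where
  "Part A = {z. (\<forall>j. z $ j \<in> {0, 1}) \<and> A *v z = 1}"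

definition NPadj :: "real ^ ('c::{finite,linorder}) ^ 'r \<Rightarrow> (real ^ 'c coord) set" where
  "NPadj A = {v. (\<forall>k. v $ k \<in> {0, 1})
      \<and> (\<forall>j. v $ X j + v $ Xbar j = 1)
      \<and> (\<forall>j. v $ Y1 + v $ Y2 + v $ Xp j + v $ Xbar j = 2)
      \<and> (\<forall>r i j k. i < j \<and> j < k \<and> A $ r $ i = 1 \<and> A $ r $ j = 1 \<and> A $ r $ k = 1
            \<longrightarrow> v $ Y3 + v $ X i + v $ Xp j + v $ Xp k = 2)}"

definition NPadj_sub :: "real ^ ('c::{finite,linorder}) ^ 'r \<Rightarrow> real \<Rightarrow> real \<Rightarrow> real \<Rightarrow> (real ^ 'c coord) set" where
  "NPadj_sub A a b c = {v \<in> NPadj A. v $ Y1 = a \<and> v $ Y2 = b \<and> v $ Y3 = c}"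

definition affine_map :: "('a::real_vector \<Rightarrow> 'b::real_vector) \<Rightarrow> bool" where
  "affine_map f \<longleftrightarrow> (\<exists>L b. linear L \<and> (\<forall>x. f x = L x + b))"

definition aff_equiv :: "'a::real_vector set \<Rightarrow> 'b::real_vector set \<Rightarrow> bool" where
  "aff_equiv S T \<longleftrightarrow> (\<exists>f. affine_map f \<and> inj_on f S \<and> f ` S = T)"

definition aff_reduces :: "'a::real_vector set \<Rightarrow> 'b::real_vector set \<Rightarrow> bool" where
  "aff_reduces P Q \<longleftrightarrow> (\<exists>\<alpha>. affine_map \<alpha> \<and> inj_on \<alpha> (convex hull P)
       \<and> (\<alpha> ` (convex hull P)) face_of (convex hull Q))"

end

theory Submission
  imports Defs
begin

text \<open>
  Fix y1 = a, y2 = b = 1 - a and y3 = c with a, c \<in> {0, 1}. Then the column equations of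
  NPadj(A) force x'_j = x_j and xbar_j = 1 - x_j, and each row equation says that x sums to
  2 - c on the support of the row. Hence x (for c = 1) or its complement 1 - x (for c = 0) is
  exactly a point of Part(A), and this correspondence extends to mutually inverse affine maps,
  so the convex hulls are affinely equivalent.
  Prescribing the values p_k \<in> {0, 1} of some coordinates k \<in> K selects exactly the points of
  a finite 0/1 set at which the linear form \<Sum>k\<in>K. (2 p_k - 1) s_k attains its maximum
  \<Sum>k\<in>K. p_k, so the hull of the selected points is a face of the hull. With all coordinates
  prescribed, this shows that every point of a finite 0/1 set is a vertex of its hull.
\<close>

lemma affine_map_iff_linear: "affine_map f \<longleftrightarrow> linear (\<lambda>x. f x - f 0)"
proof
  assume "affine_map f"
  then obtain L b where "linear L" "\<And>x. f x = L x + b" unfolding affine_map_def by blast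
  then show "linear (\<lambda>x. f x - f 0)" by (simp add: linear_0)
next
  assume "linear (\<lambda>x. f x - f 0)"
  then show "affine_map f"
    unfolding affine_map_def by (intro exI[of _ "\<lambda>x. f x - f 0"] exI[of _ "f 0"]) auto
qed

lemma affine_map_convex_combination:
  assumes "affine_map f"
  shows "f ((1 - u) *\<^sub>R x + u *\<^sub>R y) = (1 - u) *\<^sub>R f x + u *\<^sub>R f y"
proof -
  obtain L b where L: "linear L" and f: "\<And>x. f x = L x + b"
    using assms unfolding affine_map_def by blast
  have "f ((1 - u) *\<^sub>R x + u *\<^sub>R y) = (1 - u) *\<^sub>R L x + u *\<^sub>R L y + b"
    by (simp add: f linear_add[OF L] linear_scale[OF L])
  then show ?thesis by (simp add: f algebra_simps)
qed

lemma affine_map_image_convex_hull: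
  assumes "affine_map f"
  shows "f ` (convex hull S) = convex hull (f ` S)"
proof -
  obtain L b where L: "linear L" and f: "\<And>x. f x = L x + b"
    using assms unfolding affine_map_def by blast
  have f_comp: "f = (\<lambda>x. b + x) \<circ> L" by (auto simp: f add.commute)
  show ?thesis unfolding f_comp image_comp[symmetric]
    by (simp add: convex_hull_translation convex_hull_linear_image[OF L])
qed

lemma affine_map_inj_on_convex_hull:
  assumes f: "affine_map f" and g: "affine_map g" and gf: "\<And>x. x \<in> S \<Longrightarrow> g (f x) = x"
  shows "inj_on f (convex hull S)"
proof -
  have "convex {x. g (f x) = x}"
    unfolding convex_alt
    by (simp add: affine_map_convex_combination[OF f] affine_map_convex_combination[OF g])
  then have "convex hull S \<subseteq> {x. g (f x) = x}"
    using gf by (intro hull_minimal) auto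
  then show ?thesis by (metis (mono_tags) inj_on_def mem_Collect_eq subsetD)
qed

lemma aff_equiv_convex_hull_image:
  assumes "affine_map f" "affine_map g" "\<And>x. x \<in> S \<Longrightarrow> g (f x) = x"
  shows "aff_equiv (convex hull S) (convex hull (f ` S))"
  unfolding aff_equiv_def
  using assms affine_map_inj_on_convex_hull affine_map_image_convex_hull by blast

lemma aff_reduces_convex_hull_image:
  assumes "affine_map f" "affine_map g" "\<And>x. x \<in> P \<Longrightarrow> g (f x) = x"
    and "convex hull (f ` P) face_of convex hull Q"
  shows "aff_reduces P Q"
  unfolding aff_reduces_def
  using assms affine_map_inj_on_convex_hull affine_map_image_convex_hull by metis

lemma convex_hull_supporting_face_of:
  fixes S :: "'a::euclidean_space set"
  assumes "finite S" and le: "\<And>s. s \<in> S \<Longrightarrow> d \<bullet> s \<le> \<beta>"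
  shows "convex hull {s \<in> S. d \<bullet> s = \<beta>} face_of convex hull S"
proof (rule face_of_convex_hulls)
  let ?T = "{s \<in> S. d \<bullet> s = \<beta>}"
  have "affine hull ?T \<subseteq> {x. d \<bullet> x = \<beta>}"
    by (intro hull_minimal) (auto simp: affine_hyperplane)
  moreover have "S - ?T \<subseteq> {x. d \<bullet> x < \<beta>}"
    using le by (auto simp: less_le)
  then have "convex hull (S - ?T) \<subseteq> {x. d \<bullet> x < \<beta>}"
    by (intro hull_minimal) (auto simp: convex_halfspace_lt)
  ultimately show "affine hull ?T \<inter> convex hull (S - ?T) = {}" by auto
qed (use assms in auto)

lemma convex_hull_coordinate_face_of:
  fixes S :: "(real ^ 'n) set"
  assumes "finite S" and S01: "\<And>s k. s \<in> S \<Longrightarrow> k \<in> K \<Longrightarrow> s $ k \<in> {0, 1}"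
    and p01: "\<And>k. k \<in> K \<Longrightarrow> p k \<in> {0, 1}"
  shows "convex hull {s \<in> S. \<forall>k \<in> K. s $ k = p k} face_of convex hull S"
proof -
  define d :: "real ^ 'n" where "d = (\<chi> k. if k \<in> K then 2 * p k - 1 else 0)"
  have gap: "p k - (2 * p k - 1) * s $ k \<ge> 0"
    "p k - (2 * p k - 1) * s $ k = 0 \<longleftrightarrow> s $ k = p k"
    if "s \<in> S" "k \<in> K" for s k
    using S01[OF that] p01[OF that(2)] by auto
  have "d \<bullet> s = (\<Sum>k\<in>UNIV. if k \<in> K then (2 * p k - 1) * s $ k else 0)" for s
    unfolding d_def inner_vec_def by (rule sum.cong) auto
  then have slack: "(\<Sum>k\<in>K. p k) - d \<bullet> s = (\<Sum>k\<in>K. p k - (2 * p k - 1) * s $ k)" for s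
    by (simp add: sum.If_cases sum_subtractf)
  have le: "d \<bullet> s \<le> (\<Sum>k\<in>K. p k)" if "s \<in> S" for s
  proof -
    have "0 \<le> (\<Sum>k\<in>K. p k - (2 * p k - 1) * s $ k)"
      by (intro sum_nonneg gap(1)[OF that])
    with slack[of s] show ?thesis by linarith
  qed
  have "d \<bullet> s = (\<Sum>k\<in>K. p k) \<longleftrightarrow> (\<forall>k\<in>K. s $ k = p k)" if "s \<in> S" for s
  proof -
    have "(\<Sum>k\<in>K. p k - (2 * p k - 1) * s $ k) = 0
        \<longleftrightarrow> (\<forall>k\<in>K. p k - (2 * p k - 1) * s $ k = 0)"
      by (rule sum_nonneg_eq_0_iff) (use gap(1)[OF that] in auto)
    with slack[of s] gap(2)[OF that] show ?thesis by auto
  qed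
  then have "{s \<in> S. d \<bullet> s = (\<Sum>k\<in>K. p k)} = {s \<in> S. \<forall>k \<in> K. s $ k = p k}" by blast
  with convex_hull_supporting_face_of[OF \<open>finite S\<close> le] show ?thesis by simp
qed

lemma extreme_points_convex_hull_01:
  fixes S :: "(real ^ 'n) set"
  assumes "finite S" and S01: "\<And>s k. s \<in> S \<Longrightarrow> s $ k \<in> {0, 1}"
  shows "{v. v extreme_point_of convex hull S} = S"
proof
  show "{v. v extreme_point_of convex hull S} \<subseteq> S"
    by (rule extreme_points_of_convex_hull)
  show "S \<subseteq> {v. v extreme_point_of convex hull S}"
  proof
    fix v assume "v \<in> S"
    then have "{s \<in> S. \<forall>k \<in> UNIV. s $ k = v $ k} = {v}" by (auto simp: vec_eq_iff)
    moreover have "convex hull {s \<in> S. \<forall>k \<in> UNIV. s $ k = v $ k} face_of convex hull S"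
      using \<open>finite S\<close> by (rule convex_hull_coordinate_face_of) (use S01 \<open>v \<in> S\<close> in blast)+
    ultimately show "v \<in> {v. v extreme_point_of convex hull S}"
      by (simp add: face_of_singleton)
  qed
qed

lemma finite_vectors_01: "finite {v :: real ^ 'n. \<forall>k. v $ k \<in> {0, 1}}"
proof -
  have "{v :: real ^ 'n. \<forall>k. v $ k \<in> {0, 1}} \<subseteq> vec_lambda ` (PiE UNIV (\<lambda>_. {0, 1}))"
  proof
    fix v :: "real ^ 'n" assume "v \<in> {v. \<forall>k. v $ k \<in> {0, 1}}"
    then have "vec_nth v \<in> PiE UNIV (\<lambda>_. {0, 1})" by (auto simp: PiE_iff)
    then show "v \<in> vec_lambda ` (PiE UNIV (\<lambda>_. {0, 1}))" by (metis image_eqI vec_nth_inverse)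
  qed
  moreover have "finite (PiE (UNIV :: 'n set) (\<lambda>_. {0, 1 :: real}))"
    by (rule finite_PiE) auto
  ultimately show ?thesis by (metis finite_imageI finite_subset)
qed

lemma card_3_obtain_sorted:
  fixes S :: "'a::linorder set"
  assumes "card S = 3"
  obtains i j k where "i < j" "j < k" "S = {i, j, k}"
proof -
  have "finite S" using assms by (metis card.infinite zero_neq_numeral)
  then have "length (sorted_list_of_set S) = 3" using assms by simp
  then obtain i j k where ijk: "sorted_list_of_set S = [i, j, k]"
    by (metis (no_types) length_0_conv length_Suc_conv numeral_3_eq_3)
  have "sorted_wrt (<) [i, j, k]" unfolding ijk[symmetric] by (rule strict_sorted_list_of_set)
  moreover have "S = {i, j, k}"
    using \<open>finite S\<close> ijk by (metis list.set set_sorted_list_of_set)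
  ultimately show thesis using that by auto
qed

lemma sum_card_3_iff_ordered_triples:
  fixes S :: "'a::linorder set" and x :: "'a \<Rightarrow> 'b::comm_monoid_add"
  assumes "card S = 3"
  shows "(\<forall>i j k. i < j \<and> j < k \<and> i \<in> S \<and> j \<in> S \<and> k \<in> S \<longrightarrow> x i + x j + x k = s)
     \<longleftrightarrow> sum x S = s"
proof -
  obtain i j k where "i < j" "j < k" and S: "S = {i, j, k}"
    using card_3_obtain_sorted[OF assms] .
  then have "i \<noteq> j" "i \<noteq> k" "j \<noteq> k" by auto
  then have "sum x S = x i + x j + x k" by (simp add: S add.assoc)
  with \<open>i < j\<close> \<open>j < k\<close> show ?thesis unfolding S by auto
qed

lemma matrix_vector_mult_01:
  assumes "\<forall>j. A $ r $ j \<in> {0, 1 :: real}"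
  shows "(A *v z) $ r = (\<Sum>j | A $ r $ j = 1. z $ j)"
proof -
  have "(A *v z) $ r = (\<Sum>j\<in>UNIV. A $ r $ j * z $ j)"
    by (simp add: matrix_vector_mult_def)
  also have "\<dots> = (\<Sum>j\<in>UNIV. if A $ r $ j = 1 then z $ j else 0)"
    by (rule sum.cong) (use assms in auto)
  finally show ?thesis by (simp add: sum.If_cases)
qed

lemma Part_iff:
  assumes "\<forall>i j. A $ i $ j \<in> {0, 1}"
  shows "z \<in> Part A \<longleftrightarrow> (\<forall>j. z $ j \<in> {0, 1}) \<and> (\<forall>r. (\<Sum>j | A $ r $ j = 1. z $ j) = 1)"
  using assms by (simp add: Part_def vec_eq_iff matrix_vector_mult_01)

definition flip :: "real \<Rightarrow> real \<Rightarrow> real" where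
  "flip c s = (1 - c) + (2 * c - 1) * s"

lemma flip_flip: "c \<in> {0, 1} \<Longrightarrow> flip c (flip c s) = s"
  by (auto simp: flip_def algebra_simps)

lemma flip_01: "c \<in> {0, 1} \<Longrightarrow> s \<in> {0, 1} \<Longrightarrow> flip c s \<in> {0, 1}"
  by (auto simp: flip_def)

lemma sum_flip_card_3:
  assumes "card S = 3" and "c \<in> {0, 1}"
  shows "(\<Sum>j\<in>S. flip c (x j)) = 2 - c \<longleftrightarrow> sum x S = 1"
proof -
  have "(\<Sum>j\<in>S. flip c (x j)) = 3 * (1 - c) + (2 * c - 1) * sum x S"
    using assms(1) by (simp add: flip_def sum.distrib sum_distrib_left)
  with assms(2) show ?thesis by auto
qed

definition face_embed :: "real \<Rightarrow> real \<Rightarrow> real \<Rightarrow> real ^ 'c \<Rightarrow> real ^ 'c coord" where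
  "face_embed a b c z = (\<chi> k. case k of Y1 \<Rightarrow> a | Y2 \<Rightarrow> b | Y3 \<Rightarrow> c
     | X j \<Rightarrow> flip c (z $ j) | Xbar j \<Rightarrow> 1 - flip c (z $ j) | Xp j \<Rightarrow> flip c (z $ j))"

definition face_proj :: "real \<Rightarrow> real ^ 'c coord \<Rightarrow> real ^ 'c" where
  "face_proj c v = (\<chi> j. flip c (v $ X j))"

lemma affine_map_face_embed: "affine_map (face_embed a b c)"
  unfolding affine_map_iff_linear
  by (rule linearI) (auto simp: vec_eq_iff face_embed_def flip_def algebra_simps split: coord.split)

lemma affine_map_face_proj: "affine_map (face_proj c)"
  unfolding affine_map_iff_linear
  by (rule linearI) (auto simp: vec_eq_iff face_proj_def flip_def algebra_simps)

lemma face_proj_face_embed: "c \<in> {0, 1} \<Longrightarrow> face_proj c (face_embed a b c z) = z"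
  by (simp add: vec_eq_iff face_proj_def face_embed_def flip_flip)

lemma NPadj_sub_iff:
  fixes A :: "real ^ ('c::{finite,linorder}) ^ ('r::finite)"
  assumes three_ones: "\<forall>i. card {j. A $ i $ j = 1} = 3" and "b = 1 - a"
  shows "v \<in> NPadj_sub A a b c \<longleftrightarrow>
    (\<forall>k. v $ k \<in> {0, 1}) \<and> v $ Y1 = a \<and> v $ Y2 = b \<and> v $ Y3 = c
    \<and> (\<forall>j. v $ Xbar j = 1 - v $ X j \<and> v $ Xp j = v $ X j)
    \<and> (\<forall>r. (\<Sum>j | A $ r $ j = 1. v $ X j) = 2 - c)"
proof -
  have column: "v $ X j + v $ Xbar j = 1 \<and> v $ Y1 + v $ Y2 + v $ Xp j + v $ Xbar j = 2
      \<longleftrightarrow> v $ Xbar j = 1 - v $ X j \<and> v $ Xp j = v $ X j"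
    if "v $ Y1 + v $ Y2 = 1" for j
    using that by (smt (verit))
  have columns: "(\<forall>j. v $ X j + v $ Xbar j = 1) \<and> (\<forall>j. v $ Y1 + v $ Y2 + v $ Xp j + v $ Xbar j = 2)
      \<longleftrightarrow> (\<forall>j. v $ Xbar j = 1 - v $ X j \<and> v $ Xp j = v $ X j)"
    if "v $ Y1 + v $ Y2 = 1"
    unfolding all_conj_distrib[symmetric] by (simp only: column[OF that])
  have rows: "(\<forall>i j k. i < j \<and> j < k \<and> A $ r $ i = 1 \<and> A $ r $ j = 1 \<and> A $ r $ k = 1
        \<longrightarrow> v $ Y3 + v $ X i + v $ Xp j + v $ Xp k = 2)
      \<longleftrightarrow> (\<Sum>j | A $ r $ j = 1. v $ X j) = 2 - v $ Y3"
    if "\<forall>j. v $ Xp j = v $ X j" for r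
    using sum_card_3_iff_ordered_triples[OF three_ones[rule_format, of r],
        of "\<lambda>j. v $ X j" "2 - v $ Y3"] that
    by (simp add: eq_diff_eq ac_simps)
  show ?thesis
    unfolding NPadj_sub_def NPadj_def mem_Collect_eq
    using columns rows \<open>b = 1 - a\<close> by auto
qed

lemma NPadj_sub_eq_image_Part:
  fixes A :: "real ^ ('c::{finite,linorder}) ^ ('r::finite)"
  assumes zero_one: "\<forall>i j. A $ i $ j \<in> {0, 1}"
    and three_ones: "\<forall>i. card {j. A $ i $ j = 1} = 3"
    and a: "a \<in> {0, 1}" and "b = 1 - a" and c: "c \<in> {0, 1}"
  shows "NPadj_sub A a b c = face_embed a b c ` Part A"
proof (intro equalityI subsetI)
  fix v assume "v \<in> NPadj_sub A a b c"
  then have v01: "\<forall>k. v $ k \<in> {0, 1}" and Y: "v $ Y1 = a" "v $ Y2 = b" "v $ Y3 = c"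
    and cols: "\<forall>j. v $ Xbar j = 1 - v $ X j \<and> v $ Xp j = v $ X j"
    and rows: "\<forall>r. (\<Sum>j | A $ r $ j = 1. v $ X j) = 2 - c"
    using NPadj_sub_iff[OF three_ones \<open>b = 1 - a\<close>] by auto
  have "(\<Sum>j | A $ r $ j = 1. flip c (flip c (v $ X j))) = 2 - c" for r
    using rows by (simp add: flip_flip[OF c])
  then have "(\<Sum>j | A $ r $ j = 1. face_proj c v $ j) = 1" for r
    using sum_flip_card_3[OF three_ones[rule_format] c, of "\<lambda>j. flip c (v $ X j)"]
    by (simp add: face_proj_def)
  moreover have "face_proj c v $ j \<in> {0, 1}" for j
    unfolding face_proj_def vec_lambda_beta using flip_01[OF c] v01 by blast
  ultimately have "face_proj c v \<in> Part A"
    unfolding Part_iff[OF zero_one] by blast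
  moreover have "face_embed a b c (face_proj c v) = v"
    using Y cols c
    by (simp add: vec_eq_iff face_embed_def face_proj_def flip_flip split: coord.split)
  ultimately show "v \<in> face_embed a b c ` Part A" by (metis image_eqI)
next
  fix v assume "v \<in> face_embed a b c ` Part A"
  then obtain z where "z \<in> Part A" and v: "v = face_embed a b c z" ..
  then have z01: "\<forall>j. z $ j \<in> {0, 1}" and "\<forall>r. (\<Sum>j | A $ r $ j = 1. z $ j) = 1"
    using Part_iff[OF zero_one] by auto
  moreover have "\<forall>j. flip c (z $ j) \<in> {0, 1}"
    using z01 flip_01[OF c] by blast
  ultimately show "v \<in> NPadj_sub A a b c"
    unfolding NPadj_sub_iff[OF three_ones \<open>b = 1 - a\<close>] v
    using a c \<open>b = 1 - a\<close>
    by (auto simp: face_embed_def sum_flip_card_3[OF three_ones[rule_format] c]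
        split: coord.split)
qed

lemma aff_equiv_NPadj_sub_Part:
  fixes A :: "real ^ ('c::{finite,linorder}) ^ ('r::finite)"
  assumes "\<forall>i j. A $ i $ j \<in> {0, 1}" and "\<forall>i. card {j. A $ i $ j = 1} = 3"
    and "a \<in> {0, 1}" and "b = 1 - a" and c: "c \<in> {0, 1}"
  shows "aff_equiv (convex hull (NPadj_sub A a b c)) (convex hull (Part A))"
proof -
  have F: "NPadj_sub A a b c = face_embed a b c ` Part A"
    using NPadj_sub_eq_image_Part[OF assms] .
  then have "face_proj c ` NPadj_sub A a b c = Part A"
    by (simp add: image_comp comp_def face_proj_face_embed[OF c])
  moreover have "aff_equiv (convex hull (NPadj_sub A a b c))
      (convex hull (face_proj c ` NPadj_sub A a b c))"
    by (rule aff_equiv_convex_hull_image[OF affine_map_face_proj affine_map_face_embed])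
      (auto simp: F face_proj_face_embed[OF c])
  ultimately show ?thesis by simp
qed

lemma finite_NPadj: "finite (NPadj A)"
  by (rule finite_subset[OF _ finite_vectors_01]) (auto simp: NPadj_def)

lemma NPadj_sub_face_of:
  assumes "a \<in> {0, 1}" "b \<in> {0, 1}" "c \<in> {0, 1}"
  shows "convex hull (NPadj_sub A a b c) face_of convex hull (NPadj A)"
proof -
  define p where "p k = (if k = Y1 then a else if k = Y2 then b else c)" for k :: "'a coord"
  have "{s \<in> NPadj A. \<forall>k \<in> {Y1, Y2, Y3}. s $ k = p k} = NPadj_sub A a b c"
    by (auto simp: NPadj_sub_def p_def)
  moreover have "convex hull {s \<in> NPadj A. \<forall>k \<in> {Y1, Y2, Y3}. s $ k = p k}
      face_of convex hull NPadj A"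
    using assms by (intro convex_hull_coordinate_face_of finite_NPadj) (auto simp: NPadj_def p_def)
  ultimately show ?thesis by simp
qed

lemma extreme_points_NPadj_sub:
  "{v. v extreme_point_of convex hull (NPadj_sub A a b c)} = NPadj_sub A a b c"
  by (rule extreme_points_convex_hull_01)
    (auto simp: NPadj_sub_def NPadj_def intro: finite_subset[OF _ finite_NPadj])

theorem mainTheorem3:
  fixes A :: "real ^ ('c::{finite,linorder}) ^ ('r::finite)"
  assumes zero_one: "\<forall>i j. A $ i $ j \<in> {0, 1}"
    and three_ones: "\<forall>i. card {j. A $ i $ j = 1} = 3"
  shows "(\<forall>(a, b, c) \<in> {(0, 1, 1), (1, 0, 1), (0, 1, 0), (1, 0, 0)}.
            (\<exists>G. G face_of convex hull (NPadj A)
                 \<and> {v. v extreme_point_of G} = NPadj_sub A a b c)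
          \<and> aff_equiv (convex hull (NPadj_sub A a b c)) (convex hull (Part A)))
       \<and> aff_reduces (Part A) (NPadj A)"
proof
  have face: "\<exists>G. G face_of convex hull (NPadj A)
      \<and> {v. v extreme_point_of G} = NPadj_sub A a b c"
    if "a \<in> {0, 1}" "b \<in> {0, 1}" "c \<in> {0, 1}" for a b c
    using NPadj_sub_face_of[OF that] extreme_points_NPadj_sub by blast
  show "\<forall>(a, b, c) \<in> {(0, 1, 1), (1, 0, 1), (0, 1, 0), (1, 0, 0)}.
            (\<exists>G. G face_of convex hull (NPadj A)
                 \<and> {v. v extreme_point_of G} = NPadj_sub A a b c)
          \<and> aff_equiv (convex hull (NPadj_sub A a b c)) (convex hull (Part A))"
    using face aff_equiv_NPadj_sub_Part[OF zero_one three_ones, where a = 0 and b = 1]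
      aff_equiv_NPadj_sub_Part[OF zero_one three_ones, where a = 1 and b = 0] by auto
  have "convex hull (face_embed 0 1 1 ` Part A) face_of convex hull (NPadj A)"
    using NPadj_sub_face_of[of 0 1 1 A]
      NPadj_sub_eq_image_Part[OF zero_one three_ones, where a = 0 and b = 1 and c = 1] by simp
  then show "aff_reduces (Part A) (NPadj A)"
    by (rule aff_reduces_convex_hull_image[OF affine_map_face_embed affine_map_face_proj[of 1],
          rotated])
      (simp add: face_proj_face_embed)
qed

end
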